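(* Let $S\subset\mathbb{N}$ be a WM set. Then $S$ is 1-recurrent: for every $E\subset\mathbb{N}$ with positive upper Banach density there exists $s\in S$ with $E\cap(E-s)\neq\emptyset$. In particular $S$ is a Poincaré set: for every probability measure preserving system $(X,\Sigma,\mu,T)$ and every $A\in\Sigma$ with $\mu(A)>0$ there exists $s\in S$ with $\mu(A\cap T^{-s}A)>0$.
   Context: $\mathbb{N}=\{1,2,\dots\}$. Upper Banach density: $d^*(E)=\limsup_{b_n-a_n\to\infty}\frac{|E\cap\{a_n,\dots,b_n\}|}{b_n-a_n+1}$. $\Omega=\{0,1\}^{\mathbb{N}}$ with product topology and left shift $T$; $X_{1_S}$ is the closure of $\{T^n1_S:n\ge0\}$. A point $\xi$ is generic for $(X,\mu,T)$ if $\frac1N\sum_{n=0}^{N-1}f(T^n\xi)\to\int f\,d\mu$ for all continuous $f$. $d(S)=\lim_N\frac1N|S\cap\{1,\dots,N\}|$. $S$ is a WM set if for some $T$-invariant Borel probability $\mu$ on $X_{1_S}$, $1_S$ is generic for $(X_{1_S},\mu,T)$, this system is weakly mixing, and $d(S)>0$. *)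

theory Defs
  imports "HOL-Probability.Probability"
begin

(* Points of Omega = {0,1}^N (N = {1,2,...}) are encoded as  nat => bool  with
   index k standing for the position k+1; the topology on  nat => bool  is the
   product topology (bool carries the discrete topology). *)

definition shift :: "(nat \<Rightarrow> bool) \<Rightarrow> (nat \<Rightarrow> bool)" where
  "shift \<omega> = (\<lambda>k. \<omega> (Suc k))"

definition indic_pt :: "nat set \<Rightarrow> (nat \<Rightarrow> bool)" where
  "indic_pt S = (\<lambda>k. Suc k \<in> S)"

definition orbit_closure :: "(nat \<Rightarrow> bool) \<Rightarrow> (nat \<Rightarrow> bool) set" where
  "orbit_closure \<xi> = closure {(shift ^^ n) \<xi> | n. True}"

definition generic_point ::
    "(nat \<Rightarrow> bool) set \<Rightarrow> (nat \<Rightarrow> bool) measure \<Rightarrow> (nat \<Rightarrow> bool) \<Rightarrow> bool" where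
  "generic_point X \<mu> \<xi> \<longleftrightarrow>
     (\<forall>f :: (nat \<Rightarrow> bool) \<Rightarrow> real. continuous_on X f \<longrightarrow>
        (\<lambda>N. (\<Sum>n<N. f ((shift ^^ n) \<xi>)) / real N) \<longlonglongrightarrow> (LINT x:X|\<mu>. f x))"

definition invariant_borel_prob ::
    "(nat \<Rightarrow> bool) set \<Rightarrow> (nat \<Rightarrow> bool) measure \<Rightarrow> bool" where
  "invariant_borel_prob X \<mu> \<longleftrightarrow>
     prob_space \<mu> \<and> sets \<mu> = sets borel \<and> emeasure \<mu> X = 1 \<and>
     shift \<in> measurable \<mu> \<mu> \<and> distr \<mu> \<mu> shift = \<mu>"

definition weakly_mixing :: "'a measure \<Rightarrow> ('a \<Rightarrow> 'a) \<Rightarrow> bool" where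
  "weakly_mixing M T \<longleftrightarrow>
     (\<forall>A\<in>sets M. \<forall>B\<in>sets M.
        (\<lambda>N. (\<Sum>n<N. \<bar>measure M (A \<inter> ((T ^^ n) -` B \<inter> space M)) - measure M A * measure M B\<bar>)
              / real N) \<longlonglongrightarrow> 0)"

definition has_density :: "nat set \<Rightarrow> real \<Rightarrow> bool" where
  "has_density S d \<longleftrightarrow> (\<lambda>N. real (card (S \<inter> {1..N})) / real N) \<longlonglongrightarrow> d"

definition WM_set :: "nat set \<Rightarrow> bool" where
  "WM_set S \<longleftrightarrow> S \<subseteq> {1..} \<and>
     (\<exists>\<mu>. invariant_borel_prob (orbit_closure (indic_pt S)) \<mu> \<and>
          generic_point (orbit_closure (indic_pt S)) \<mu> (indic_pt S) \<and>
          weakly_mixing \<mu> shift) \<and>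
     (\<exists>d>0. has_density S d)"

definition upper_banach_density :: "nat set \<Rightarrow> ereal" where
  "upper_banach_density E =
     Sup {limsup (\<lambda>n. ereal (real (card (E \<inter> {a n..b n})) / real (b n - a n + 1))) |
          a b :: nat \<Rightarrow> nat.
            (\<forall>n. a n \<le> b n) \<and> filterlim (\<lambda>n. b n - a n) at_top sequentially}"

end

theory Submission
  imports Defs "HOL-Library.Diagonal_Subsequence"
begin

text \<open>
  Call \<open>c : \<nat> \<Rightarrow> \<real>\<close> positive definite if all forms \<open>\<Sum>p,q<N. x p * x q * c |p - q|\<close> are
  nonnegative. Both statements are instances of one fact: if c is positive definite,
  \<open>|c| \<le> 1\<close> and \<open>\<Sum>p,q<N. c |p - q| \<ge> \<delta> N\<^sup>2\<close> for all N, then \<open>c s > 0\<close> for some \<open>s \<in> S\<close>.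
  For the Poincare property take \<open>c k = \<mu>(A \<inter> T\<^sup>-\<^sup>k A)\<close> and \<open>\<delta> = \<mu>(A)\<^sup>2\<close>; for recurrence take
  a limit of the correlations \<open>k \<mapsto> |E \<inter> (E - k) \<inter> I| / |I|\<close> along intervals I on which E has
  relative density at least \<delta>. In both cases the lower bound is Cauchy-Schwarz.

  For the fact itself, the lower bound forces \<open>\<Sum>n<L. c n > \<delta>L/4\<close> for infinitely many L. If
  \<open>c \<le> 0\<close> on S, then with d the density of S and \<open>b = 1\<^sub>S - d\<close> the sum \<open>\<Sum>n<L. b n * c n\<close> is at
  most \<open>-d \<Sum>n<L. c n\<close>, hence infinitely often below \<open>-d\<delta>L/4\<close>. But weak mixing of the system
  generated by \<open>1\<^sub>S\<close> says that the correlations of b are Cesaro null; van der Corput's inequality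
  for the positive form then gives \<open>\<Sum>p,q<L. b p * b q * c |p - q| = o(L\<^sup>2)\<close>, and Cauchy-Schwarz
  against the first unit vector turns this into \<open>\<Sum>n<L. b n * c n = o(L)\<close>.
\<close>

section \<open>Positive definite sequences\<close>

definition nat_dist :: "nat \<Rightarrow> nat \<Rightarrow> nat" where
  "nat_dist m n = (if m \<le> n then n - m else m - n)"

definition toeplitz_form :: "(nat \<Rightarrow> real) \<Rightarrow> nat \<Rightarrow> (nat \<Rightarrow> real) \<Rightarrow> (nat \<Rightarrow> real) \<Rightarrow> real" where
  "toeplitz_form c N x y = (\<Sum>p<N. \<Sum>q<N. x p * y q * c (nat_dist p q))"

definition pos_def_seq :: "(nat \<Rightarrow> real) \<Rightarrow> bool" where
  "pos_def_seq c \<longleftrightarrow> (\<forall>N x. 0 \<le> toeplitz_form c N x x)"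

lemma nat_dist_commute: "nat_dist m n = nat_dist n m"
  by (auto simp: nat_dist_def)

lemma nat_dist_Suc_Suc [simp]: "nat_dist (Suc p) (Suc q) = nat_dist p q"
  by (simp add: nat_dist_def)

lemma nat_dist_0 [simp]: "nat_dist 0 q = q" "nat_dist p 0 = p" "nat_dist p p = 0"
  by (auto simp: nat_dist_def)

lemma toeplitz_form_commute: "toeplitz_form c N x y = toeplitz_form c N y x"
  unfolding toeplitz_form_def by (subst sum.swap) (simp add: nat_dist_commute mult_ac)

lemma toeplitz_form_add_left:
  "toeplitz_form c N (\<lambda>p. x p + y p) z = toeplitz_form c N x z + toeplitz_form c N y z"
  unfolding toeplitz_form_def by (simp add: distrib_right sum.distrib)

lemma toeplitz_form_add_right:
  "toeplitz_form c N z (\<lambda>p. x p + y p) = toeplitz_form c N z x + toeplitz_form c N z y"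
  by (metis toeplitz_form_commute toeplitz_form_add_left)

lemma toeplitz_form_scale_left:
  "toeplitz_form c N (\<lambda>p. t * x p) z = t * toeplitz_form c N x z"
  unfolding toeplitz_form_def by (simp add: sum_distrib_left mult_ac)

lemma toeplitz_form_scale_right:
  "toeplitz_form c N z (\<lambda>p. t * x p) = t * toeplitz_form c N z x"
  by (metis toeplitz_form_commute toeplitz_form_scale_left)

lemma toeplitz_form_sum_left:
  "toeplitz_form c N (\<lambda>p. \<Sum>j\<in>J. w j p) z = (\<Sum>j\<in>J. toeplitz_form c N (w j) z)"
  unfolding toeplitz_form_def by (simp add: sum_distrib_right sum.swap[of _ J])

lemma toeplitz_form_sum_right:
  "toeplitz_form c N z (\<lambda>p. \<Sum>j\<in>J. w j p) = (\<Sum>j\<in>J. toeplitz_form c N z (w j))"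
  by (simp add: toeplitz_form_commute[of c N z] toeplitz_form_sum_left)

lemma toeplitz_form_cong:
  "(\<And>p. p < N \<Longrightarrow> x p = x' p) \<Longrightarrow> (\<And>p. p < N \<Longrightarrow> y p = y' p) \<Longrightarrow>
    toeplitz_form c N x y = toeplitz_form c N x' y'"
  unfolding toeplitz_form_def by (intro sum.cong) auto

lemma toeplitz_form_cauchy_schwarz:
  assumes "pos_def_seq c"
  shows "2 * \<bar>toeplitz_form c N x y\<bar> \<le> toeplitz_form c N x x + toeplitz_form c N y y"
proof -
  let ?B = "toeplitz_form c N"
  have "0 \<le> ?B (\<lambda>p. x p + y p) (\<lambda>p. x p + y p)"
    and "0 \<le> ?B (\<lambda>p. x p + (-1) * y p) (\<lambda>p. x p + (-1) * y p)"
    using assms by (auto simp: pos_def_seq_def)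
  moreover have "?B (\<lambda>p. x p + y p) (\<lambda>p. x p + y p) = ?B x x + 2 * ?B x y + ?B y y"
    by (simp add: toeplitz_form_add_left toeplitz_form_add_right toeplitz_form_commute[of c N y x])
  moreover have "?B (\<lambda>p. x p + (-1) * y p) (\<lambda>p. x p + (-1) * y p) = ?B x x - 2 * ?B x y + ?B y y"
    unfolding toeplitz_form_add_left toeplitz_form_add_right toeplitz_form_scale_left
      toeplitz_form_scale_right toeplitz_form_commute[of c N y x] by simp
  ultimately show ?thesis by (simp add: abs_if)
qed

lemma toeplitz_form_sum_le:
  assumes "pos_def_seq c" and "finite J"
  shows "toeplitz_form c N (\<lambda>p. \<Sum>j\<in>J. w j p) (\<lambda>p. \<Sum>j\<in>J. w j p)
           \<le> real (card J) * (\<Sum>j\<in>J. toeplitz_form c N (w j) (w j))"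
proof -
  let ?B = "toeplitz_form c N"
  have "2 * (\<Sum>j\<in>J. \<Sum>j'\<in>J. ?B (w j) (w j')) = (\<Sum>j\<in>J. \<Sum>j'\<in>J. 2 * ?B (w j) (w j'))"
    by (simp add: sum_distrib_left)
  also have "\<dots> \<le> (\<Sum>j\<in>J. \<Sum>j'\<in>J. ?B (w j) (w j) + ?B (w j') (w j'))"
    using toeplitz_form_cauchy_schwarz[OF assms(1)] abs_ge_self
    by (intro sum_mono) (smt (verit, best))
  also have "\<dots> = 2 * (real (card J) * (\<Sum>j\<in>J. ?B (w j) (w j)))"
    by (simp add: sum.distrib sum_distrib_left sum.swap[of _ J J])
  finally show ?thesis
    by (simp add: toeplitz_form_sum_left toeplitz_form_sum_right)
qed

lemma toeplitz_form_ones: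
  "toeplitz_form c N (\<lambda>_. 1) (\<lambda>_. 1) = real N * c 0 + 2 * (\<Sum>L<N. \<Sum>n<L. c (Suc n))"
proof (induction N)
  case 0
  show ?case by (simp add: toeplitz_form_def)
next
  case (Suc N)
  have last_row: "(\<Sum>p<N. c (nat_dist p N)) = (\<Sum>n<N. c (Suc n))"
  proof -
    have "(\<Sum>p<N. c (nat_dist p N)) = (\<Sum>p<N. c (Suc (N - Suc p)))"
      by (rule sum.cong) (auto simp: nat_dist_def Suc_diff_Suc)
    also have "\<dots> = (\<Sum>n<N. c (Suc n))" by (rule sum.nat_diff_reindex)
    finally show ?thesis .
  qed
  have "toeplitz_form c (Suc N) (\<lambda>_. 1) (\<lambda>_. 1) = toeplitz_form c N (\<lambda>_. 1) (\<lambda>_. 1)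
      + (\<Sum>p<N. c (nat_dist p N)) + (\<Sum>q<N. c (nat_dist N q)) + c 0"
    unfolding toeplitz_form_def by (simp add: sum.distrib)
  also have "(\<Sum>q<N. c (nat_dist N q)) = (\<Sum>p<N. c (nat_dist p N))"
    by (simp add: nat_dist_commute)
  finally show ?case by (simp add: last_row Suc.IH algebra_simps)
qed

text \<open>The quadratic lower bound on the form at the all-ones vector cannot hold if the
  partial sums of c eventually stay below \<open>\<delta>L/4\<close>, because the form is essentially
  twice the sum of these partial sums.\<close>

lemma partial_sums_large_of_toeplitz_ones:
  fixes c :: "nat \<Rightarrow> real"
  assumes c_le_1: "\<And>k. \<bar>c k\<bar> \<le> 1" and "\<delta> > 0"
    and lower: "\<And>N. \<delta> * real N ^ 2 \<le> toeplitz_form c N (\<lambda>_. 1) (\<lambda>_. 1)"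
  shows "\<exists>L\<ge>L0. (\<Sum>n<L. c (Suc n)) > \<delta> / 4 * real L"
proof (rule ccontr)
  assume "\<not> ?thesis"
  hence small: "\<And>L. L \<ge> L0 \<Longrightarrow> (\<Sum>n<L. c (Suc n)) \<le> \<delta> / 4 * real L" by force
  have bound: "(\<Sum>n<L. c (Suc n)) \<le> \<delta> / 4 * real L + real L0" for L
  proof (cases "L \<ge> L0")
    case True
    thus ?thesis using small[OF True] by simp
  next
    case False
    have "(\<Sum>n<L. c (Suc n)) \<le> (\<Sum>n<L. 1)"
      by (rule sum_mono) (use c_le_1 in \<open>simp add: abs_le_iff\<close>)
    moreover have "0 \<le> \<delta> / 4 * real L" using \<open>\<delta> > 0\<close> by simp
    ultimately show ?thesis using False by simp
  qed
  define N where "N = nat \<lceil>(1 + 2 * real L0) * 2 / \<delta>\<rceil> + 1"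
  have "N > 0" by (simp add: N_def)
  have "\<delta> * real N ^ 2 \<le> real N * c 0 + 2 * (\<Sum>L<N. \<Sum>n<L. c (Suc n))"
    using lower[of N] by (simp add: toeplitz_form_ones)
  also have "\<dots> \<le> real N * 1 + 2 * (\<Sum>L<N. \<delta> / 4 * real N + real L0)"
  proof -
    have "real N * c 0 \<le> real N * 1"
      using c_le_1[of 0] by (intro mult_left_mono) (auto simp: abs_le_iff)
    moreover have "(\<Sum>L<N. \<Sum>n<L. c (Suc n)) \<le> (\<Sum>L<N. \<delta> / 4 * real N + real L0)"
    proof (rule sum_mono)
      fix L assume "L \<in> {..<N}"
      hence "\<delta> / 4 * real L \<le> \<delta> / 4 * real N" using \<open>\<delta> > 0\<close> by (intro mult_left_mono) auto
      thus "(\<Sum>n<L. c (Suc n)) \<le> \<delta> / 4 * real N + real L0" using bound[of L] by linarith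
    qed
    ultimately show ?thesis by linarith
  qed
  also have "\<dots> = real N * (1 + \<delta> / 2 * real N + 2 * real L0)" by (simp add: algebra_simps)
  finally have "\<delta> * real N \<le> 1 + \<delta> / 2 * real N + 2 * real L0"
    using \<open>N > 0\<close> by (simp add: power2_eq_square mult.assoc)
  moreover have "(1 + 2 * real L0) * 2 / \<delta> < real N"
    unfolding N_def by (smt (verit) of_nat_1 of_nat_add real_nat_ceiling_ge)
  hence "1 + 2 * real L0 < \<delta> / 2 * real N" using \<open>\<delta> > 0\<close> by (simp add: field_simps)
  ultimately show False by linarith
qed

section \<open>Van der Corput's inequality\<close>

definition lag_sum :: "(nat \<Rightarrow> real) \<Rightarrow> nat \<Rightarrow> nat \<Rightarrow> real" where
  "lag_sum b L k = (\<Sum>p<L. \<Sum>q<L. if nat_dist p q = k then b p * b q else 0)"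

definition autocorr_sum :: "(nat \<Rightarrow> real) \<Rightarrow> nat \<Rightarrow> nat \<Rightarrow> real" where
  "autocorr_sum b L k = (\<Sum>p<L. if p + k < L then b p * b (p + k) else 0)"

lemma sum_nat_dist_eq_lag_sum:
  "(\<Sum>p<L. \<Sum>q<L. g (nat_dist p q) * (b p * b q)) = (\<Sum>k<L+H. g k * lag_sum b L k)"
proof -
  have "(\<Sum>p<L. \<Sum>q<L. g (nat_dist p q) * (b p * b q))
      = (\<Sum>p<L. \<Sum>q<L. \<Sum>k<L+H. if nat_dist p q = k then g k * (b p * b q) else 0)"
  proof (intro sum.cong refl)
    fix p q assume "p \<in> {..<L}" "q \<in> {..<L}"
    hence "nat_dist p q \<in> {..<L+H}" by (auto simp: nat_dist_def)
    thus "g (nat_dist p q) * (b p * b q)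
        = (\<Sum>k<L+H. if nat_dist p q = k then g k * (b p * b q) else 0)"
      by (simp add: sum.delta')
  qed
  also have "\<dots> = (\<Sum>p<L. \<Sum>k<L+H. \<Sum>q<L. if nat_dist p q = k then g k * (b p * b q) else 0)"
    by (intro sum.cong refl sum.swap)
  also have "\<dots> = (\<Sum>k<L+H. \<Sum>p<L. \<Sum>q<L. if nat_dist p q = k then g k * (b p * b q) else 0)"
    by (rule sum.swap)
  also have "\<dots> = (\<Sum>k<L+H. g k * lag_sum b L k)"
    unfolding lag_sum_def
    by (intro sum.cong refl) (simp add: sum_distrib_left if_distrib cong: if_cong)
  finally show ?thesis .
qed

lemma sum_window_indicator:
  assumes "p < L" "H > 0"
  shows "(\<Sum>j<L+H. if p \<le> j \<and> j < p + H then x / real H else 0) = x"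
proof -
  have "(\<Sum>j<L+H. if p \<le> j \<and> j < p + H then x / real H else 0)
      = (\<Sum>j\<in>{..<L+H} \<inter> {p..<p+H}. x / real H)"
    by (subst sum.inter_restrict) (auto intro!: sum.cong)
  also have "{..<L+H} \<inter> {p..<p+H} = {p..<p+H}" using assms by auto
  finally show ?thesis using assms by simp
qed

lemma sum_window_indicator_product:
  assumes "p < L" "q < L"
  shows "(\<Sum>j<L+H. (if p \<le> j \<and> j < p + H then x else 0) * (if q \<le> j \<and> j < q + H then y else 0))
     = x * y * real (H - nat_dist p q)"
proof -
  have "(\<Sum>j<L+H. (if p \<le> j \<and> j < p + H then x else 0) * (if q \<le> j \<and> j < q + H then y else 0))
      = (\<Sum>j\<in>{..<L+H} \<inter> {max p q..<min p q + H}. x * y)"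
    by (subst sum.inter_restrict) (auto intro!: sum.cong)
  also have "{..<L+H} \<inter> {max p q..<min p q + H} = {max p q..<min p q + H}" using assms by auto
  also have "(\<Sum>j\<in>{max p q..<min p q + H}. x * y) = x * y * real (H - nat_dist p q)"
    by (auto simp: nat_dist_def)
  finally show ?thesis .
qed

text \<open>Van der Corput's trick: b is the sum over j of the pieces \<open>w j\<close>, its restrictions to
  the windows \<open>(j - H, j]\<close>, scaled by \<open>1/H\<close>; the form of each piece only sees lags below H.\<close>

lemma toeplitz_form_window_sum:
  fixes b c :: "nat \<Rightarrow> real" and H L :: nat
  defines "w \<equiv> \<lambda>j p. if p \<le> j \<and> j < p + H then b p / real H else 0"
  shows "(\<Sum>j<L+H. toeplitz_form c L (w j) (w j))
       = (\<Sum>k<L+H. c k * real (H - k) / real H ^ 2 * lag_sum b L k)"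
proof -
  have "(\<Sum>j<L+H. toeplitz_form c L (w j) (w j))
      = (\<Sum>p<L. \<Sum>q<L. \<Sum>j<L+H. w j p * w j q * c (nat_dist p q))"
    unfolding toeplitz_form_def by (simp add: sum.swap[where A = "{..<L+H}"])
  also have "\<dots> = (\<Sum>p<L. \<Sum>q<L. (c (nat_dist p q) * real (H - nat_dist p q) / real H ^ 2) * (b p * b q))"
  proof (intro sum.cong refl)
    fix p q assume "p \<in> {..<L}" "q \<in> {..<L}"
    hence "(\<Sum>j<L+H. w j p * w j q) = b p / real H * (b q / real H) * real (H - nat_dist p q)"
      unfolding w_def by (intro sum_window_indicator_product) auto
    moreover have "(\<Sum>j<L+H. w j p * w j q * c (nat_dist p q))
        = (\<Sum>j<L+H. w j p * w j q) * c (nat_dist p q)"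
      by (simp add: sum_distrib_right)
    ultimately show "(\<Sum>j<L+H. w j p * w j q * c (nat_dist p q))
        = (c (nat_dist p q) * real (H - nat_dist p q) / real H ^ 2) * (b p * b q)"
      by (simp add: power2_eq_square field_simps)
  qed
  also have "\<dots> = (\<Sum>k<L+H. c k * real (H - k) / real H ^ 2 * lag_sum b L k)"
    by (rule sum_nat_dist_eq_lag_sum)
  finally show ?thesis .
qed

lemma van_der_corput_toeplitz:
  assumes pd: "pos_def_seq c" and c_le_1: "\<And>k. \<bar>c k\<bar> \<le> 1" and "H > 0"
  shows "toeplitz_form c L b b \<le> real (L+H) / real H * (\<Sum>k<H. \<bar>lag_sum b L k\<bar>)"
proof -
  define w where "w j p = (if p \<le> j \<and> j < p + H then b p / real H else 0)" for j p
  have "toeplitz_form c L b b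
      = toeplitz_form c L (\<lambda>p. \<Sum>j\<in>{..<L+H}. w j p) (\<lambda>p. \<Sum>j\<in>{..<L+H}. w j p)"
    by (rule toeplitz_form_cong) (simp_all add: w_def sum_window_indicator \<open>H > 0\<close>)
  also have "\<dots> \<le> real (L+H) * (\<Sum>j<L+H. toeplitz_form c L (w j) (w j))"
    using toeplitz_form_sum_le[OF pd, of "{..<L+H}" L w] by simp
  also have "(\<Sum>j<L+H. toeplitz_form c L (w j) (w j))
      = (\<Sum>k<L+H. c k * real (H - k) / real H ^ 2 * lag_sum b L k)"
    unfolding w_def by (rule toeplitz_form_window_sum)
  also have "\<dots> \<le> (\<Sum>k<L+H. \<bar>c k * real (H - k) / real H ^ 2 * lag_sum b L k\<bar>)"
    by (rule sum_mono) (rule abs_ge_self)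
  also have "\<dots> = (\<Sum>k<H. \<bar>c k * real (H - k) / real H ^ 2 * lag_sum b L k\<bar>)"
    by (rule sum.mono_neutral_right) auto
  also have "\<dots> \<le> (\<Sum>k<H. \<bar>lag_sum b L k\<bar> / real H)"
  proof (rule sum_mono)
    fix k
    have "\<bar>c k * real (H - k)\<bar> \<le> 1 * real H"
      unfolding abs_mult using c_le_1[of k] by (intro mult_mono) auto
    hence "\<bar>c k * real (H - k) / real H ^ 2\<bar> \<le> 1 / real H"
      using \<open>H > 0\<close> by (simp add: power2_eq_square divide_simps abs_mult)
    thus "\<bar>c k * real (H - k) / real H ^ 2 * lag_sum b L k\<bar> \<le> \<bar>lag_sum b L k\<bar> / real H"
      unfolding abs_mult by (metis abs_ge_zero divide_inverse_commute mult.commute mult_right_mono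
          inverse_eq_divide)
  qed
  finally show ?thesis by (simp add: sum_divide_distrib[symmetric] mult_left_mono)
qed

lemma abs_lag_sum_le: "\<bar>lag_sum b L k\<bar> \<le> 2 * \<bar>autocorr_sum b L k\<bar>"
proof (cases "k = 0")
  case True
  have "lag_sum b L k = (\<Sum>p<L. \<Sum>q<L. if q = p then b p * b q else 0)"
    unfolding lag_sum_def True by (intro sum.cong refl) (auto simp: nat_dist_def)
  also have "\<dots> = autocorr_sum b L k" unfolding autocorr_sum_def True by (simp add: sum.delta)
  finally show ?thesis by simp
next
  case False
  have "lag_sum b L k = (\<Sum>p<L. \<Sum>q<L. if q = p + k then b p * b q else 0)
                     + (\<Sum>p<L. \<Sum>q<L. if p = q + k then b p * b q else 0)"
    unfolding lag_sum_def sum.distrib[symmetric] using False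
    by (intro sum.cong refl) (auto simp: nat_dist_def)
  also have "(\<Sum>p<L. \<Sum>q<L. if p = q + k then b p * b q else 0)
           = (\<Sum>q<L. \<Sum>p<L. if p = q + k then b p * b q else 0)"
    by (rule sum.swap)
  also have "(\<Sum>p<L. \<Sum>q<L. if q = p + k then b p * b q else 0) = autocorr_sum b L k"
    unfolding autocorr_sum_def by (simp add: sum.delta)
  also have "(\<Sum>q<L. \<Sum>p<L. if p = q + k then b p * b q else 0) = autocorr_sum b L k"
    unfolding autocorr_sum_def by (simp add: sum.delta mult.commute cong: if_cong)
  finally show ?thesis by simp
qed

lemma autocorr_sum_approx:
  assumes "\<And>n. \<bar>b n\<bar> \<le> B"
  shows "\<bar>autocorr_sum b L k - (\<Sum>p<L. b p * b (p+k))\<bar> \<le> real k * B\<^sup>2"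
proof -
  let ?I = "{..<L} \<inter> {p. \<not> p + k < L}"
  have "autocorr_sum b L k - (\<Sum>p<L. b p * b (p+k)) = (\<Sum>p\<in>?I. - (b p * b (p+k)))"
    unfolding autocorr_sum_def sum_subtractf[symmetric]
    by (subst sum.inter_restrict) (auto intro!: sum.cong)
  also have "\<bar>\<dots>\<bar> \<le> (\<Sum>p\<in>?I. \<bar>b p * b (p+k)\<bar>)"
    by (rule order_trans[OF sum_abs]) simp
  also have "\<dots> \<le> (\<Sum>p\<in>?I. B\<^sup>2)"
  proof (rule sum_mono)
    fix p
    have "\<bar>b p\<bar> * \<bar>b (p+k)\<bar> \<le> B * B" using assms[of p] assms[of "p+k"] by (intro mult_mono) auto
    thus "\<bar>b p * b (p+k)\<bar> \<le> B\<^sup>2" by (simp add: abs_mult power2_eq_square)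
  qed
  also have "\<dots> \<le> real k * B\<^sup>2"
  proof -
    have "?I \<subseteq> {L - k..<L}" by auto
    hence "card ?I \<le> k" using card_mono[of "{L - k..<L}" ?I] by simp
    thus ?thesis by (simp add: mult_right_mono)
  qed
  finally show ?thesis .
qed

lemma toeplitz_form_le_correlation_sums:
  assumes pd: "pos_def_seq c" and c_le_1: "\<And>k. \<bar>c k\<bar> \<le> 1"
    and b_le: "\<And>n. \<bar>b n\<bar> \<le> B" and "H > 0"
  shows "toeplitz_form c L b b
           \<le> 2 * real (L+H) / real H * (\<Sum>k<H. \<bar>\<Sum>p<L. b p * b (p+k)\<bar> + real k * B\<^sup>2)"
proof -
  have "toeplitz_form c L b b \<le> real (L+H) / real H * (\<Sum>k<H. \<bar>lag_sum b L k\<bar>)"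
    by (rule van_der_corput_toeplitz[OF pd c_le_1 \<open>H > 0\<close>])
  also have "\<dots> \<le> real (L+H) / real H * (\<Sum>k<H. 2 * (\<bar>\<Sum>p<L. b p * b (p+k)\<bar> + real k * B\<^sup>2))"
  proof (intro mult_left_mono sum_mono)
    fix k
    have "\<bar>autocorr_sum b L k\<bar> \<le> \<bar>\<Sum>p<L. b p * b (p+k)\<bar> + real k * B\<^sup>2"
      using autocorr_sum_approx[of b B L k, OF b_le] by linarith
    thus "\<bar>lag_sum b L k\<bar> \<le> 2 * (\<bar>\<Sum>p<L. b p * b (p+k)\<bar> + real k * B\<^sup>2)"
      by (intro order_trans[OF abs_lag_sum_le]) simp
  qed simp
  also have "\<dots> = 2 * real (L+H) / real H * (\<Sum>k<H. \<bar>\<Sum>p<L. b p * b (p+k)\<bar> + real k * B\<^sup>2)"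
    by (simp only: sum_distrib_left[symmetric]) simp
  finally show ?thesis .
qed

lemma toeplitz_form_small_of_cesaro_null:
  fixes b c \<gamma> :: "nat \<Rightarrow> real"
  assumes pd: "pos_def_seq c" and c_le_1: "\<And>k. \<bar>c k\<bar> \<le> 1"
    and b_le: "\<And>n. \<bar>b n\<bar> \<le> B"
    and corr: "\<And>k. (\<lambda>L. (\<Sum>p<L. b p * b (p+k)) / real L) \<longlonglongrightarrow> \<gamma> k"
    and null: "(\<lambda>H. (\<Sum>k<H. \<bar>\<gamma> k\<bar>) / real H) \<longlonglongrightarrow> 0"
    and "\<epsilon> > 0"
  shows "eventually (\<lambda>L. toeplitz_form c L b b \<le> \<epsilon> * real L ^ 2) sequentially"
proof -
  obtain H where H: "(\<Sum>k<H. \<bar>\<gamma> k\<bar>) / real H < \<epsilon> / 4" "H > 0"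
    using eventually_conj[OF order_tendstoD(2)[OF null, of "\<epsilon>/4"] eventually_gt_at_top[of 0]]
      \<open>\<epsilon> > 0\<close> eventually_sequentially by auto
  define e where "e L k = \<bar>(\<Sum>p<L. b p * b (p+k)) / real L\<bar> + real k * B\<^sup>2 / real L" for L k
  define bound where "bound L = 2 * (1 + real H / real L) * ((\<Sum>k<H. e L k) / real H)" for L
  have "bound \<longlonglongrightarrow> 2 * (1 + 0) * ((\<Sum>k<H. \<bar>\<gamma> k\<bar> + 0) / real H)"
    unfolding bound_def e_def
    by (intro tendsto_mult tendsto_const tendsto_add tendsto_divide tendsto_sum tendsto_rabs corr
        lim_const_over_n) (use H in auto)
  moreover have "2 * (1 + 0) * ((\<Sum>k<H. \<bar>\<gamma> k\<bar> + 0) / real H) < \<epsilon>"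
  proof -
    have "0 \<le> (\<Sum>k<H. \<bar>\<gamma> k\<bar>) / real H" by (simp add: sum_nonneg)
    thus ?thesis using H(1) by (simp only: add_0_right mult_1_right)
  qed
  ultimately have "eventually (\<lambda>L. bound L < \<epsilon>) sequentially" by (rule order_tendstoD(2))
  with eventually_gt_at_top[of 0] show ?thesis
  proof eventually_elim
    case (elim L)
    have "(\<Sum>k<H. \<bar>\<Sum>p<L. b p * b (p+k)\<bar> + real k * B\<^sup>2) = real L * (\<Sum>k<H. e L k)"
      unfolding e_def sum_distrib_left using elim by (intro sum.cong) (simp_all add: field_simps abs_divide)
    hence "toeplitz_form c L b b \<le> 2 * real (L+H) / real H * (real L * (\<Sum>k<H. e L k))"
      using toeplitz_form_le_correlation_sums[where b = b and B = B and H = H and L = L,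
          OF pd c_le_1 b_le \<open>H > 0\<close>] by simp
    also have "\<dots> = real L ^ 2 * bound L"
      unfolding bound_def using elim H(2) by (simp add: field_simps power2_eq_square)
    also have "\<dots> \<le> real L ^ 2 * \<epsilon>" using elim by (intro mult_left_mono) auto
    finally show ?case by (simp add: mult.commute)
  qed
qed

lemma toeplitz_form_prepend_zero:
  "toeplitz_form c (Suc L) (\<lambda>p. if p = 0 then 0 else b (p - 1)) (\<lambda>p. if p = 0 then 0 else b (p - 1))
     = toeplitz_form c L b b"
  unfolding toeplitz_form_def sum.lessThan_Suc_shift by simp

lemma toeplitz_form_unit_prepend_zero:
  "toeplitz_form c (Suc L) (\<lambda>p. if p = 0 then t else 0) (\<lambda>p. if p = 0 then 0 else b (p - 1))
     = t * (\<Sum>n<L. b n * c (Suc n))"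
  unfolding toeplitz_form_def sum.lessThan_Suc_shift by (simp add: sum_distrib_left mult_ac)

lemma toeplitz_form_unit:
  "toeplitz_form c (Suc L) (\<lambda>p. if p = 0 then t else 0) (\<lambda>p. if p = 0 then t else 0) = t * t * c 0"
  unfolding toeplitz_form_def sum.lessThan_Suc_shift by simp

text \<open>Cauchy-Schwarz for the form on \<open>{0..L}\<close> between the unit vector \<open>t e\<^sub>0\<close> and b shifted
  by one, with \<open>t = \<eta>L\<close>.\<close>

lemma correlation_small_of_toeplitz_form_small:
  fixes b c :: "nat \<Rightarrow> real"
  assumes pd: "pos_def_seq c" and c_le_1: "\<And>k. \<bar>c k\<bar> \<le> 1" and "\<eta> > 0"
    and small: "eventually (\<lambda>L. toeplitz_form c L b b \<le> \<eta>\<^sup>2 * real L ^ 2) sequentially"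
  shows "eventually (\<lambda>L. \<bar>\<Sum>n<L. b n * c (Suc n)\<bar> \<le> \<eta> * real L) sequentially"
  using small eventually_gt_at_top[of 0]
proof eventually_elim
  case (elim L)
  define t where "t = \<eta> * real L"
  have "t > 0" unfolding t_def using elim \<open>\<eta> > 0\<close> by simp
  have "2 * \<bar>t * (\<Sum>n<L. b n * c (Suc n))\<bar> \<le> t * t * c 0 + toeplitz_form c L b b"
    using toeplitz_form_cauchy_schwarz[OF pd, of "Suc L" "\<lambda>p. if p = 0 then t else 0"
        "\<lambda>p. if p = 0 then 0 else b (p - 1)"]
    by (simp only: toeplitz_form_prepend_zero toeplitz_form_unit_prepend_zero toeplitz_form_unit)
  also have "\<dots> \<le> t * t + t * t"
  proof (rule add_mono)
    show "t * t * c 0 \<le> t * t"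
      using c_le_1[of 0] by (intro mult_left_le) (auto simp: abs_le_iff)
    show "toeplitz_form c L b b \<le> t * t"
      using elim by (simp add: t_def power_mult_distrib power2_eq_square mult_ac)
  qed
  finally have "t * \<bar>\<Sum>n<L. b n * c (Suc n)\<bar> \<le> t * t"
    using \<open>t > 0\<close> by (simp add: abs_mult)
  hence "\<bar>\<Sum>n<L. b n * c (Suc n)\<bar> \<le> t" using \<open>t > 0\<close> by simp
  thus ?case by (simp add: t_def)
qed

lemma cesaro_mean_shift:
  fixes a :: "nat \<Rightarrow> real"
  assumes "(\<lambda>N. (\<Sum>n<N. a n) / real N) \<longlonglongrightarrow> l"
  shows "(\<lambda>N. (\<Sum>n<N. a (n + k)) / real N) \<longlonglongrightarrow> l"
proof -
  have shifted: "(\<Sum>n<N. a (n + k)) = (\<Sum>n<N+k. a n) - (\<Sum>n<k. a n)" for N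
  proof -
    have "(\<Sum>n<N+k. a n) = (\<Sum>n\<in>{0..<k}. a n) + (\<Sum>n\<in>{k..<N+k}. a n)"
      by (simp add: sum.atLeastLessThan_concat atLeast0LessThan[symmetric])
    also have "(\<Sum>n\<in>{k..<N+k}. a n) = (\<Sum>n\<in>{0..<N}. a (n + k))"
      using sum.shift_bounds_nat_ivl[of a 0 k N] by simp
    finally show ?thesis by (simp add: atLeast0LessThan)
  qed
  have ratio: "(\<lambda>N. real (N+k) / real N) \<longlonglongrightarrow> 1"
  proof -
    have "(\<lambda>N. 1 + real k / real N) \<longlonglongrightarrow> 1 + 0" by (intro tendsto_add tendsto_const lim_const_over_n)
    moreover have "eventually (\<lambda>N. 1 + real k / real N = real (N+k) / real N) sequentially"
      using eventually_gt_at_top[of 0] by eventually_elim (simp add: field_simps)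
    ultimately show ?thesis by (simp add: tendsto_cong)
  qed
  have "(\<lambda>N. (\<Sum>n<N+k. a n) / real (N+k) * (real (N+k) / real N) - (\<Sum>n<k. a n) / real N)
          \<longlonglongrightarrow> l * 1 - 0"
    using LIMSEQ_ignore_initial_segment[OF assms, of k]
    by (intro tendsto_diff tendsto_mult ratio lim_const_over_n) simp
  moreover have "eventually (\<lambda>N. (\<Sum>n<N+k. a n) / real (N+k) * (real (N+k) / real N)
      - (\<Sum>n<k. a n) / real N = (\<Sum>n<N. a (n + k)) / real N) sequentially"
    using eventually_gt_at_top[of 0]
    by eventually_elim (simp add: shifted field_simps del: of_nat_add)
  ultimately show ?thesis by (simp add: tendsto_cong)
qed

lemma centered_correlation_tendsto:
  fixes s :: "nat \<Rightarrow> real"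
  assumes mean: "(\<lambda>N. (\<Sum>n<N. s n) / real N) \<longlonglongrightarrow> d"
    and corr: "(\<lambda>N. (\<Sum>n<N. s n * s (n+k)) / real N) \<longlonglongrightarrow> \<beta>"
  shows "(\<lambda>N. (\<Sum>n<N. (s n - d) * (s (n+k) - d)) / real N) \<longlonglongrightarrow> \<beta> - d\<^sup>2"
proof -
  have "(\<lambda>N. (\<Sum>n<N. s n * s (n+k)) / real N - d * ((\<Sum>n<N. s n) / real N)
           - d * ((\<Sum>n<N. s (n+k)) / real N) + d\<^sup>2 * (real N / real N))
        \<longlonglongrightarrow> \<beta> - d * d - d * d + d\<^sup>2 * 1"
  proof -
    have "(\<lambda>N. real N / real N) \<longlonglongrightarrow> 1"
      by (rule tendsto_eventually) (use eventually_gt_at_top[of 0] in eventually_elim, simp)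
    thus ?thesis
      by (rule tendsto_add[OF tendsto_diff[OF tendsto_diff[OF corr tendsto_mult[OF tendsto_const mean]]
            tendsto_mult[OF tendsto_const cesaro_mean_shift[OF mean]]] tendsto_mult[OF tendsto_const]])
  qed
  moreover have "(\<Sum>n<N. s n * s (n+k)) / real N - d * ((\<Sum>n<N. s n) / real N)
      - d * ((\<Sum>n<N. s (n+k)) / real N) + d\<^sup>2 * (real N / real N)
      = (\<Sum>n<N. (s n - d) * (s (n+k) - d)) / real N" for N
  proof -
    have "(\<Sum>n<N. (s n - d) * (s (n+k) - d))
        = (\<Sum>n<N. s n * s (n+k)) - d * (\<Sum>n<N. s n) - d * (\<Sum>n<N. s (n+k)) + d\<^sup>2 * real N"
      by (simp add: algebra_simps sum.distrib sum_subtractf sum_distrib_left power2_eq_square)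
    thus ?thesis by (cases "N = 0") (simp_all add: add_divide_distrib diff_divide_distrib)
  qed
  ultimately show ?thesis by (simp add: power2_eq_square)
qed

text \<open>The lag is \<open>Suc n\<close> because position n of s stands for the element \<open>n + 1\<close> of
  \<open>\<nat> = {1, 2, \<dots>}\<close>.\<close>

lemma pos_def_seq_positive_on_wm_sequence:
  fixes c s \<beta> :: "nat \<Rightarrow> real"
  assumes pd: "pos_def_seq c" and c_le_1: "\<And>k. \<bar>c k\<bar> \<le> 1"
    and "\<delta> > 0" and lower: "\<And>N. \<delta> * real N ^ 2 \<le> toeplitz_form c N (\<lambda>_. 1) (\<lambda>_. 1)"
    and s01: "\<And>n. s n = 0 \<or> s n = 1" and "d > 0"
    and mean: "(\<lambda>N. (\<Sum>n<N. s n) / real N) \<longlonglongrightarrow> d"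
    and corr: "\<And>k. (\<lambda>N. (\<Sum>n<N. s n * s (n+k)) / real N) \<longlonglongrightarrow> \<beta> k"
    and wm: "(\<lambda>H. (\<Sum>k<H. \<bar>\<beta> k - d\<^sup>2\<bar>) / real H) \<longlonglongrightarrow> 0"
  shows "\<exists>n. s n = 1 \<and> c (Suc n) > 0"
proof (rule ccontr)
  assume "\<not> ?thesis"
  hence nonpos: "s n * c (Suc n) \<le> 0" for n using s01[of n] by auto
  define b where "b n = s n - d" for n
  define \<eta> where "\<eta> = d * \<delta> / 8"
  have "\<eta> > 0" using \<open>\<delta> > 0\<close> \<open>d > 0\<close> by (simp add: \<eta>_def)
  have "\<bar>b n\<bar> \<le> 1 + d" for n using s01[of n] \<open>d > 0\<close> by (auto simp: b_def)
  moreover have "(\<lambda>L. (\<Sum>p<L. b p * b (p+k)) / real L) \<longlonglongrightarrow> \<beta> k - d\<^sup>2" for k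
    unfolding b_def by (rule centered_correlation_tendsto[OF mean corr])
  ultimately have "eventually (\<lambda>L. toeplitz_form c L b b \<le> \<eta>\<^sup>2 * real L ^ 2) sequentially"
    using \<open>\<eta> > 0\<close> wm by (intro toeplitz_form_small_of_cesaro_null[OF pd c_le_1]) simp_all
  hence "eventually (\<lambda>L. \<bar>\<Sum>n<L. b n * c (Suc n)\<bar> \<le> \<eta> * real L) sequentially"
    by (rule correlation_small_of_toeplitz_form_small[OF pd c_le_1 \<open>\<eta> > 0\<close>])
  then obtain L0 where L0: "\<And>L. L \<ge> L0 \<Longrightarrow> \<bar>\<Sum>n<L. b n * c (Suc n)\<bar> \<le> \<eta> * real L"
    by (auto simp: eventually_sequentially)
  obtain L where "L \<ge> L0" and large: "(\<Sum>n<L. c (Suc n)) > \<delta> / 4 * real L"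
    using partial_sums_large_of_toeplitz_ones[OF c_le_1 \<open>\<delta> > 0\<close> lower] by blast
  have "(\<Sum>n<L. b n * c (Suc n)) = (\<Sum>n<L. s n * c (Suc n)) - d * (\<Sum>n<L. c (Suc n))"
    by (simp add: b_def algebra_simps sum_subtractf sum_distrib_left)
  also have "\<dots> \<le> - d * (\<Sum>n<L. c (Suc n))"
    using sum_nonpos[of "{..<L}" "\<lambda>n. s n * c (Suc n)"] nonpos by auto
  also have "\<dots> < - 2 * \<eta> * real L"
    using large \<open>d > 0\<close> by (simp add: \<eta>_def)
  finally have "2 * \<eta> * real L < \<bar>\<Sum>n<L. b n * c (Suc n)\<bar>" by linarith
  moreover have "0 \<le> \<eta> * real L" using \<open>\<eta> > 0\<close> by simp
  ultimately show False using L0[OF \<open>L \<ge> L0\<close>] by linarith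
qed

section \<open>Correlations along dense windows\<close>

lemma bounded_family_convergent_subseq:
  fixes f :: "nat \<Rightarrow> nat \<Rightarrow> real"
  assumes bounded: "\<And>j k. \<bar>f j k\<bar> \<le> B"
  shows "\<exists>r. strict_mono r \<and> (\<forall>k. convergent (\<lambda>j. f (r j) k))"
proof -
  let ?P = "\<lambda>k s. convergent (\<lambda>j. f (s j) k)"
  interpret subseqs ?P
  proof (unfold convergent_def subseqs_def, auto)
    fix k :: nat and s :: "nat \<Rightarrow> nat" assume "strict_mono s"
    have "\<forall>j. f (s j) k \<in> {-B..B}"
      using bounded by (simp add: abs_le_iff minus_le_iff)
    then obtain l s' where "strict_mono s'" "((\<lambda>j. f (s j) k) \<circ> s') \<longlonglongrightarrow> l"
      using compact_Icc compact_imp_seq_compact seq_compactE by metis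
    thus "\<exists>s'. strict_mono (s' :: nat \<Rightarrow> nat) \<and> (\<exists>l. (\<lambda>j. f (s (s' j)) k) \<longlonglongrightarrow> l)"
      by (auto simp: comp_def)
  qed
  have "?P k diagseq" for k
  proof -
    have "?P k (diagseq \<circ> ((+) (Suc k)))"
    proof (rule diagseq_holds)
      fix r s n assume "strict_mono (r :: nat \<Rightarrow> nat)" "?P n s"
      thus "?P n (s \<circ> r)"
        using convergent_subseq_convergent[of "\<lambda>j. f (s j) n" r] by (simp add: comp_def)
    qed
    then obtain L where "(\<lambda>j. f (diagseq (j + Suc k)) k) \<longlonglongrightarrow> L"
      by (auto simp: convergent_def comp_def add.commute)
    hence "(\<lambda>j. f (diagseq j) k) \<longlonglongrightarrow> L" by (rule LIMSEQ_offset)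
    thus ?thesis by (auto simp: convergent_def)
  qed
  thus ?thesis using subseq_diagseq by blast
qed

lemma sum_shift_interval_diff_le:
  fixes g :: "nat \<Rightarrow> real"
  assumes "\<And>x. 0 \<le> g x" and "\<And>x. g x \<le> 1"
  shows "\<bar>(\<Sum>x\<in>{P..<P+l}. g (x + m)) - (\<Sum>x\<in>{P..<P+l}. g x)\<bar> \<le> real m"
proof -
  define G where "G n = (\<Sum>x<n. g x)" for n
  have increment: "0 \<le> G (n + m) - G n \<and> G (n + m) - G n \<le> real m" for n
  proof -
    have "G (n + m) - G n = (\<Sum>x\<in>{n..<n+m}. g x)"
      unfolding G_def lessThan_atLeast0 by (simp add: sum_diff_nat_ivl)
    moreover have "(\<Sum>x\<in>{n..<n+m}. g x) \<le> (\<Sum>x\<in>{n..<n+m}. 1)" by (rule sum_mono) (rule assms)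
    moreover have "0 \<le> (\<Sum>x\<in>{n..<n+m}. g x)" by (rule sum_nonneg) (rule assms)
    ultimately show ?thesis by simp
  qed
  have "(\<Sum>x\<in>{P..<P+l}. g (x + m)) = (\<Sum>x\<in>{P+m..<P+l+m}. g x)"
    using sum.shift_bounds_nat_ivl[of g P m "P+l"] by (simp add: add.commute add.left_commute)
  also have "\<dots> = G (P + l + m) - G (P + m)"
    unfolding G_def lessThan_atLeast0 by (simp add: sum_diff_nat_ivl)
  moreover have "(\<Sum>x\<in>{P..<P+l}. g x) = G (P + l) - G P"
    unfolding G_def lessThan_atLeast0 by (simp add: sum_diff_nat_ivl)
  ultimately show ?thesis using increment[of "P + l"] increment[of P] by (simp add: abs_le_iff)
qed

lemma const_divide_lengths_tendsto_0:
  fixes l :: "nat \<Rightarrow> nat"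
  assumes "\<And>j. l j > j"
  shows "(\<lambda>j. C / real (l j)) \<longlonglongrightarrow> 0"
proof (rule Lim_null_comparison[OF always_eventually])
  show "\<forall>j. norm (C / real (l j)) \<le> \<bar>C\<bar> / real (Suc j)"
  proof
    fix j
    have "real (Suc j) \<le> real (l j)" using assms[of j] by simp
    thus "norm (C / real (l j)) \<le> \<bar>C\<bar> / real (Suc j)" by (simp add: abs_divide frac_le)
  qed
  show "(\<lambda>j. \<bar>C\<bar> / real (Suc j)) \<longlonglongrightarrow> 0"
    using LIMSEQ_Suc[OF lim_const_over_n[of "\<bar>C\<bar>"]] by simp
qed

definition window_corr :: "nat set \<Rightarrow> nat \<Rightarrow> nat \<Rightarrow> nat \<Rightarrow> nat \<Rightarrow> real" where
  "window_corr E P l m q =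
     (\<Sum>x\<in>{P..<P+l}. (if x + m \<in> E then 1 else 0) * (if x + q \<in> E then 1 else 0)) / real l"

definition window_form :: "nat set \<Rightarrow> nat \<Rightarrow> nat \<Rightarrow> nat \<Rightarrow> (nat \<Rightarrow> real) \<Rightarrow> real" where
  "window_form E P l N y = (\<Sum>p<N. \<Sum>q<N. y p * y q * window_corr E P l p q)"

lemma window_corr_commute: "window_corr E P l m q = window_corr E P l q m"
  unfolding window_corr_def by (simp add: mult.commute)

lemma window_corr_bounds:
  assumes "l > 0"
  shows "0 \<le> window_corr E P l m q" "window_corr E P l m q \<le> 1"
proof -
  let ?S = "\<Sum>x\<in>{P..<P+l}. (if x + m \<in> E then 1 else 0) * (if x + q \<in> E then 1 else (0::real))"
  have "?S \<le> (\<Sum>x\<in>{P..<P+l}. 1)" by (rule sum_mono) auto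
  moreover have "0 \<le> ?S" by (rule sum_nonneg) auto
  ultimately show "0 \<le> window_corr E P l m q" "window_corr E P l m q \<le> 1"
    using assms by (simp_all add: window_corr_def divide_le_eq)
qed

lemma window_corr_shift_approx:
  assumes "l > 0" "m \<le> q"
  shows "\<bar>window_corr E P l m q - window_corr E P l 0 (q - m)\<bar> \<le> real m / real l"
proof -
  define g where "g y = (if y \<in> E then 1 else 0) * (if y + (q - m) \<in> E then 1 else (0::real))" for y
  have "window_corr E P l m q - window_corr E P l 0 (q - m)
      = ((\<Sum>x\<in>{P..<P+l}. g (x + m)) - (\<Sum>x\<in>{P..<P+l}. g x)) / real l"
    unfolding window_corr_def g_def using \<open>m \<le> q\<close> by (simp add: add.assoc diff_divide_distrib)
  also have "\<bar>\<dots>\<bar> \<le> real m / real l"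
    using sum_shift_interval_diff_le[where g = g and P = P and l = l and m = m] \<open>l > 0\<close>
    by (auto simp: g_def abs_divide intro!: divide_right_mono)
  finally show ?thesis .
qed

lemma window_corr_approx:
  assumes "l > 0"
  shows "\<bar>window_corr E P l m q - window_corr E P l 0 (nat_dist m q)\<bar> \<le> real (m + q) / real l"
proof (cases "m \<le> q")
  case True
  thus ?thesis using window_corr_shift_approx[OF assms True, of E P] assms
    by (smt (verit, best) divide_right_mono le_add1 nat_dist_def of_nat_0_le_iff of_nat_mono)
next
  case False
  thus ?thesis using window_corr_shift_approx[OF assms, of q m E P] window_corr_commute[of E P l m q] assms
    by (smt (verit, best) divide_right_mono le_add2 nat_dist_def nat_le_linear of_nat_0_le_iff of_nat_mono)
qed

lemma window_form_eq_sum_squares: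
  "window_form E P l N y = (\<Sum>x\<in>{P..<P+l}. (\<Sum>p<N. y p * (if x + p \<in> E then 1 else 0))\<^sup>2) / real l"
proof -
  let ?e = "\<lambda>z. if z \<in> E then 1 else (0::real)"
  have "window_form E P l N y
      = (\<Sum>p<N. \<Sum>q<N. (\<Sum>x\<in>{P..<P+l}. (y p * ?e (x + p)) * (y q * ?e (x + q)))) / real l"
    unfolding window_form_def window_corr_def by (simp add: sum_divide_distrib sum_distrib_left mult_ac)
  also have "(\<Sum>p<N. \<Sum>q<N. (\<Sum>x\<in>{P..<P+l}. (y p * ?e (x + p)) * (y q * ?e (x + q))))
      = (\<Sum>x\<in>{P..<P+l}. \<Sum>p<N. \<Sum>q<N. (y p * ?e (x + p)) * (y q * ?e (x + q)))"
    by (simp add: sum.swap[of _ "{P..<P+l}"])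
  also have "\<dots> = (\<Sum>x\<in>{P..<P+l}. (\<Sum>p<N. y p * ?e (x + p))\<^sup>2)"
    by (simp only: power2_eq_square sum_product)
  finally show ?thesis .
qed

lemma window_form_nonneg: "0 \<le> window_form E P l N y"
  unfolding window_form_eq_sum_squares by (intro divide_nonneg_nonneg sum_nonneg) auto

text \<open>Cauchy-Schwarz over the window, applied to \<open>x \<mapsto> |E \<inter> [x, x + N)|\<close>.\<close>

lemma window_form_ones_lower_bound:
  assumes "l > 0" and dense: "\<delta> * real l \<le> (\<Sum>x\<in>{P..<P+l}. if x \<in> E then 1 else 0)"
    and N_le: "real N \<le> \<delta> * real l"
  shows "(real N * \<delta> - real N * real N / real l)\<^sup>2 \<le> window_form E P l N (\<lambda>_. 1)"
proof -
  let ?e = "\<lambda>z. if z \<in> E then 1 else (0::real)"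
  let ?h = "\<lambda>x. (\<Sum>p<N. ?e (x + p))"
  have row: "\<delta> * real l - real N \<le> (\<Sum>x\<in>{P..<P+l}. ?e (x + p))" if "p < N" for p
  proof -
    have "\<bar>(\<Sum>x\<in>{P..<P+l}. ?e (x + p)) - (\<Sum>x\<in>{P..<P+l}. ?e x)\<bar> \<le> real p"
      by (rule sum_shift_interval_diff_le) auto
    thus ?thesis using dense that by linarith
  qed
  have "real N * (\<delta> * real l - real N) \<le> (\<Sum>p<N. \<Sum>x\<in>{P..<P+l}. ?e (x + p))"
    using sum_mono[of "{..<N}" "\<lambda>_. \<delta> * real l - real N"] row by simp
  also have "\<dots> = (\<Sum>x\<in>{P..<P+l}. ?h x)" by (rule sum.swap)
  finally have sum_lower: "real N * (\<delta> * real l - real N) \<le> (\<Sum>x\<in>{P..<P+l}. ?h x)" .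
  have "real N * \<delta> - real N * real N / real l = real N * (\<delta> * real l - real N) / real l"
    using \<open>l > 0\<close> by (simp add: field_simps)
  also have "\<dots> \<le> (\<Sum>x\<in>{P..<P+l}. ?h x) / real l"
    using sum_lower by (rule divide_right_mono) simp
  finally have "real N * \<delta> - real N * real N / real l \<le> (\<Sum>x\<in>{P..<P+l}. ?h x) / real l" .
  moreover have "0 \<le> real N * \<delta> - real N * real N / real l"
  proof -
    have "real N * real N \<le> real N * (\<delta> * real l)" using N_le by (simp add: mult_left_mono)
    thus ?thesis using \<open>l > 0\<close> by (simp add: field_simps)
  qed
  ultimately have "(real N * \<delta> - real N * real N / real l)\<^sup>2 \<le> ((\<Sum>x\<in>{P..<P+l}. ?h x) / real l)\<^sup>2"
    by (intro power_mono)
  also have "\<dots> \<le> (\<Sum>x\<in>{P..<P+l}. (?h x)\<^sup>2) * real l / real l ^ 2"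
    using sum_squared_le_sum_of_squares[of ?h "{P..<P+l}"]
    by (simp add: power_divide divide_right_mono)
  also have "\<dots> = window_form E P l N (\<lambda>_. 1)"
    unfolding window_form_eq_sum_squares using \<open>l > 0\<close> by (simp add: power2_eq_square)
  finally show ?thesis .
qed

lemma window_form_tendsto_toeplitz_form:
  assumes long: "\<And>j. l j > j"
    and lim: "\<And>k. (\<lambda>j. window_corr E (P j) (l j) 0 k) \<longlonglongrightarrow> c k"
  shows "(\<lambda>j. window_form E (P j) (l j) N y) \<longlonglongrightarrow> toeplitz_form c N y y"
proof -
  have "(\<lambda>j. window_corr E (P j) (l j) m q) \<longlonglongrightarrow> c (nat_dist m q)" for m q
  proof -
    have "(\<lambda>j. window_corr E (P j) (l j) m q - window_corr E (P j) (l j) 0 (nat_dist m q)) \<longlonglongrightarrow> 0"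
    proof (rule Lim_null_comparison[OF always_eventually])
      show "\<forall>j. norm (window_corr E (P j) (l j) m q - window_corr E (P j) (l j) 0 (nat_dist m q))
                 \<le> real (m + q) / real (l j)"
        using window_corr_approx long by (metis gr_zeroI not_less0 real_norm_def)
    qed (rule const_divide_lengths_tendsto_0[OF long])
    from tendsto_add[OF this lim[of "nat_dist m q"]] show ?thesis by simp
  qed
  thus ?thesis
    unfolding window_form_def toeplitz_form_def by (intro tendsto_sum tendsto_mult_left)
qed

lemma toeplitz_form_ones_lower_bound_of_dense_windows:
  assumes long: "\<And>j. l j > j" and "\<delta> > 0"
    and dense: "\<And>j. \<delta> * real (l j) \<le> (\<Sum>x\<in>{P j..<P j + l j}. if x \<in> E then 1 else 0)"
    and lim: "\<And>k. (\<lambda>j. window_corr E (P j) (l j) 0 k) \<longlonglongrightarrow> c k"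
  shows "\<delta>\<^sup>2 * real N ^ 2 \<le> toeplitz_form c N (\<lambda>_. 1) (\<lambda>_. 1)"
proof -
  have "(\<lambda>j. (real N * \<delta> - real N * real N / real (l j))\<^sup>2) \<longlonglongrightarrow> (real N * \<delta> - 0)\<^sup>2"
    by (intro tendsto_power tendsto_diff tendsto_const const_divide_lengths_tendsto_0 long)
  moreover have "(real N * \<delta> - real N * real N / real (l j))\<^sup>2 \<le> window_form E (P j) (l j) N (\<lambda>_. 1)"
    if "j \<ge> nat \<lceil>real N / \<delta>\<rceil>" for j
  proof (rule window_form_ones_lower_bound[OF _ dense])
    show "l j > 0" using long[of j] by simp
    have "real N / \<delta> \<le> real (l j)" using that long[of j] by linarith
    thus "real N \<le> \<delta> * real (l j)" using \<open>\<delta> > 0\<close> by (simp add: divide_le_eq mult.commute)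
  qed
  ultimately have "(real N * \<delta> - 0)\<^sup>2 \<le> toeplitz_form c N (\<lambda>_. 1) (\<lambda>_. 1)"
    using LIMSEQ_le[OF _ window_form_tendsto_toeplitz_form[OF long lim]] by blast
  thus ?thesis by (simp add: power_mult_distrib mult.commute)
qed

lemma pos_def_seq_of_dense_windows:
  fixes P l :: "nat \<Rightarrow> nat" and E :: "nat set"
  assumes long: "\<And>j. l j > j" and "\<delta> > 0"
    and dense: "\<And>j. \<delta> * real (l j) \<le> (\<Sum>x\<in>{P j..<P j + l j}. if x \<in> E then 1 else 0)"
  obtains c where "pos_def_seq c" and "\<And>k. \<bar>c k\<bar> \<le> 1"
    and "\<And>N. \<delta>\<^sup>2 * real N ^ 2 \<le> toeplitz_form c N (\<lambda>_. 1) (\<lambda>_. 1)"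
    and "\<And>k. c k > 0 \<Longrightarrow> \<exists>m\<in>E. m + k \<in> E"
proof -
  have "l j > 0" for j using long[of j] by simp
  obtain r where "strict_mono r" and conv: "\<And>k. convergent (\<lambda>j. window_corr E (P (r j)) (l (r j)) 0 k)"
    using bounded_family_convergent_subseq[of "\<lambda>j k. window_corr E (P j) (l j) 0 k" 1]
      window_corr_bounds[OF \<open>\<And>j. l j > 0\<close>] by (smt (verit) abs_le_iff)
  define c where "c k = lim (\<lambda>j. window_corr E (P (r j)) (l (r j)) 0 k)" for k
  have lim: "(\<lambda>j. window_corr E (P (r j)) (l (r j)) 0 k) \<longlonglongrightarrow> c k" for k
    unfolding c_def using conv[of k] by (simp add: convergent_LIMSEQ_iff)
  have long_r: "l (r j) > j" for j using long[of "r j"] seq_suble[OF \<open>strict_mono r\<close>, of j] by simp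
  have "\<bar>c k\<bar> \<le> 1" for k
    using LIMSEQ_le_const[OF lim] LIMSEQ_le_const2[OF lim] window_corr_bounds[OF \<open>\<And>j. l j > 0\<close>]
    by (simp add: abs_le_iff)
  moreover have "pos_def_seq c"
    using LIMSEQ_le_const[OF window_form_tendsto_toeplitz_form[OF long_r lim]] window_form_nonneg
    unfolding pos_def_seq_def by blast
  moreover have "\<delta>\<^sup>2 * real N ^ 2 \<le> toeplitz_form c N (\<lambda>_. 1) (\<lambda>_. 1)" for N
    using toeplitz_form_ones_lower_bound_of_dense_windows[OF long_r \<open>\<delta> > 0\<close> dense lim] .
  moreover have "\<exists>m\<in>E. m + k \<in> E" if pos: "c k > 0" for k
  proof -
    obtain j where "window_corr E (P (r j)) (l (r j)) 0 k > 0"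
      using order_tendstoD(1)[OF lim[of k] pos] by (auto simp: eventually_sequentially)
    hence "0 < (\<Sum>x\<in>{P (r j)..<P (r j) + l (r j)}.
                 (if x \<in> E then 1 else 0) * (if x + k \<in> E then 1 else (0::real)))"
      unfolding window_corr_def using \<open>l (r j) > 0\<close> by (simp add: zero_less_divide_iff)
    then obtain x where "(if x \<in> E then 1 else 0) * (if x + k \<in> E then 1 else (0::real)) > 0"
      by (metis (no_types, lifting) not_le sum_nonpos)
    thus ?thesis by (auto split: if_splits)
  qed
  ultimately show ?thesis using that by blast
qed

section \<open>Return correlations of measure preserving systems\<close>

lemma measurable_funpow: "T \<in> measurable M M \<Longrightarrow> T ^^ n \<in> measurable M M"
  by (induction n) (auto simp: measurable_comp[where f = T and g = "T ^^ _", unfolded comp_def] funpow_Suc_right comp_def)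

lemma distr_funpow:
  assumes T: "T \<in> measurable M M" and "distr M M T = M"
  shows "distr M M (T ^^ n) = M"
proof (induction n)
  case 0
  show ?case by (simp add: distr_id2)
next
  case (Suc n)
  have "distr M M (T ^^ Suc n) = distr M M ((T ^^ n) \<circ> T)" by (simp only: funpow_Suc_right)
  also have "\<dots> = distr (distr M M T) M (T ^^ n)"
    by (subst distr_distr) (auto simp: T measurable_funpow)
  also have "\<dots> = M" using assms(2) Suc.IH by simp
  finally show ?case .
qed

lemma measure_funpow_vimage:
  assumes "T \<in> measurable M M" "distr M M T = M" "C \<in> sets M"
  shows "measure M ((T ^^ n) -` C \<inter> space M) = measure M C"
  using measure_distr[OF measurable_funpow[OF assms(1)], of C n] distr_funpow[OF assms(1,2), of n] assms(3)
  by simp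

definition return_corr :: "'a measure \<Rightarrow> ('a \<Rightarrow> 'a) \<Rightarrow> 'a set \<Rightarrow> nat \<Rightarrow> real" where
  "return_corr M T A k = measure M (A \<inter> ((T ^^ k) -` A \<inter> space M))"

context
  fixes M :: "'a measure" and T :: "'a \<Rightarrow> 'a" and A :: "'a set"
  assumes prob: "prob_space M" and T: "T \<in> measurable M M" and invariant: "distr M M T = M"
    and A: "A \<in> sets M"
begin

definition pullback :: "nat \<Rightarrow> 'a set" where "pullback p = (T ^^ p) -` A \<inter> space M"

lemma pullback_sets: "pullback p \<in> sets M"
  unfolding pullback_def using measurable_funpow[OF T] A by (auto intro: measurable_sets)

lemma measure_pullback_inter: "measure M (pullback p \<inter> pullback q) = return_corr M T A (nat_dist p q)"
proof -
  have "measure M (pullback m \<inter> pullback n) = return_corr M T A (n - m)" if "m \<le> n" for m n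
  proof -
    have "T ^^ n = (T ^^ (n - m)) \<circ> (T ^^ m)" using that by (simp add: funpow_add[symmetric])
    hence "pullback m \<inter> pullback n = (T ^^ m) -` (A \<inter> ((T ^^ (n - m)) -` A \<inter> space M)) \<inter> space M"
      unfolding pullback_def using measurable_space[OF measurable_funpow[OF T]] by auto
    moreover have "A \<inter> ((T ^^ (n - m)) -` A \<inter> space M) \<in> sets M"
      using pullback_sets[of "n - m"] A unfolding pullback_def by auto
    ultimately show ?thesis
      unfolding return_corr_def using measure_funpow_vimage[OF T invariant] by metis
  qed
  from this[of p q] this[of q p] show ?thesis unfolding nat_dist_def by (auto simp: Int_commute)
qed

lemma abs_return_corr_le_1: "\<bar>return_corr M T A k\<bar> \<le> 1"
  unfolding return_corr_def using prob_space.prob_le_1[OF prob] by (simp add: measure_nonneg)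

lemma integrable_indicator_pullback: "integrable M (indicator (pullback p) :: 'a \<Rightarrow> real)"
  using pullback_sets[of p] finite_measure.emeasure_finite[OF prob_space.axioms(1)[OF prob]]
  by (simp add: integrable_indicator_iff sets.Int_space_eq2 less_top[symmetric])

lemma integrable_indicator_pullback_mult:
  "integrable M (\<lambda>\<omega>. indicator (pullback p) \<omega> * indicator (pullback q) \<omega> :: real)"
  using integrable_indicator_pullback[of p] by (intro integrable_real_mult_indicator) (auto simp: pullback_sets)

lemma toeplitz_form_return_corr:
  "toeplitz_form (return_corr M T A) N x y
     = (\<integral>\<omega>. (\<Sum>p<N. x p * indicator (pullback p) \<omega>) * (\<Sum>q<N. y q * indicator (pullback q) \<omega>) \<partial>M)"
proof -
  interpret prob_space M by (rule prob)
  have "toeplitz_form (return_corr M T A) N x y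
      = (\<Sum>p<N. \<Sum>q<N. (\<integral>\<omega>. x p * y q * (indicator (pullback p) \<omega> * indicator (pullback q) \<omega>) \<partial>M))"
    unfolding toeplitz_form_def
  proof (intro sum.cong refl)
    fix p q
    have "(\<lambda>\<omega>. indicator (pullback p) \<omega> * indicator (pullback q) \<omega> :: real) = indicator (pullback p \<inter> pullback q)"
      by (auto simp: indicator_def)
    hence "(\<integral>\<omega>. indicator (pullback p) \<omega> * indicator (pullback q) \<omega> \<partial>M) = return_corr M T A (nat_dist p q)"
      using pullback_sets[of p] pullback_sets[of q] by (simp add: measure_pullback_inter[symmetric])
    thus "x p * y q * return_corr M T A (nat_dist p q)
        = (\<integral>\<omega>. x p * y q * (indicator (pullback p) \<omega> * indicator (pullback q) \<omega>) \<partial>M)"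
      by simp
  qed
  also have "\<dots> = (\<integral>\<omega>. (\<Sum>p<N. \<Sum>q<N. x p * y q * (indicator (pullback p) \<omega> * indicator (pullback q) \<omega>)) \<partial>M)"
    by (simp add: integrable_indicator_pullback_mult)
  also have "\<dots> = (\<integral>\<omega>. (\<Sum>p<N. x p * indicator (pullback p) \<omega>) * (\<Sum>q<N. y q * indicator (pullback q) \<omega>) \<partial>M)"
    by (intro Bochner_Integration.integral_cong refl) (simp only: sum_product mult_ac)
  finally show ?thesis .
qed

lemma pos_def_seq_return_corr: "pos_def_seq (return_corr M T A)"
  unfolding pos_def_seq_def toeplitz_form_return_corr by (auto intro: Bochner_Integration.integral_nonneg)

text \<open>Jensen for \<open>g = \<Sum>\<^sub>p\<^sub><\<^sub>N 1\<^bsub>T\<^sup>-\<^sup>p A\<^esub>\<close>, whose mean is \<open>N \<mu>(A)\<close> by invariance.\<close>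

lemma toeplitz_form_return_corr_ones:
  "measure M A ^ 2 * real N ^ 2 \<le> toeplitz_form (return_corr M T A) N (\<lambda>_. 1) (\<lambda>_. 1)"
proof -
  interpret prob_space M by (rule prob)
  define g where "g \<omega> = (\<Sum>p<N. indicator (pullback p) \<omega> :: real)" for \<omega>
  have "integrable M g" unfolding g_def by (intro Bochner_Integration.integrable_sum integrable_indicator_pullback)
  moreover have "integrable M (\<lambda>\<omega>. (g \<omega>)\<^sup>2)"
    unfolding g_def power2_eq_square sum_product
    by (intro Bochner_Integration.integrable_sum integrable_indicator_pullback_mult)
  ultimately have "(expectation g)\<^sup>2 \<le> expectation (\<lambda>\<omega>. (g \<omega>)\<^sup>2)"
    using variance_eq[of g] variance_positive[of g] by simp
  moreover have "expectation g = real N * measure M A"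
  proof -
    have "expectation g = (\<Sum>p<N. measure M (pullback p))"
      unfolding g_def using pullback_sets by (simp add: integrable_indicator_pullback)
    also have "\<dots> = (\<Sum>p<N. measure M A)"
      unfolding pullback_def using measure_funpow_vimage[OF T invariant A] by simp
    finally show ?thesis by simp
  qed
  moreover have "toeplitz_form (return_corr M T A) N (\<lambda>_. 1) (\<lambda>_. 1) = expectation (\<lambda>\<omega>. (g \<omega>)\<^sup>2)"
    unfolding toeplitz_form_return_corr g_def by (simp add: power2_eq_square)
  ultimately show ?thesis by (simp add: power_mult_distrib mult.commute)
qed

end

section \<open>WM sets\<close>

lemma funpow_shift: "(shift ^^ n) \<omega> = (\<lambda>j. \<omega> (j + n))"
  by (induction n arbitrary: \<omega>) (simp_all add: shift_def)

definition pair_cylinder :: "nat \<Rightarrow> (nat \<Rightarrow> bool) set" where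
  "pair_cylinder i = {\<omega>. \<omega> 0 \<and> \<omega> i}"

lemma continuous_on_indicator_pair_cylinder:
  "continuous_on X (indicator (pair_cylinder i) :: (nat \<Rightarrow> bool) \<Rightarrow> real)"
proof -
  let ?h = "\<lambda>b::bool. if b then 1 else (0::real)"
  have coord: "continuous_on UNIV (\<lambda>\<omega> :: nat \<Rightarrow> bool. ?h (\<omega> j))" for j
    using continuous_on_compose[OF continuous_on_product_coordinates[of j], of ?h]
    by (simp add: comp_def)
  have "indicator (pair_cylinder i) = (\<lambda>\<omega> :: nat \<Rightarrow> bool. ?h (\<omega> 0) * ?h (\<omega> i))"
    by (auto simp: pair_cylinder_def indicator_def)
  thus ?thesis using continuous_on_mult[OF coord coord] continuous_on_subset by fastforce
qed

lemma open_pair_cylinder: "open (pair_cylinder i)"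
proof -
  have "open {\<omega> :: nat \<Rightarrow> bool. \<omega> j}" for j
    using open_vimage[of "{True}" "\<lambda>\<omega> :: nat \<Rightarrow> bool. \<omega> j"] continuous_on_product_coordinates[of j]
    by (simp add: discrete_topology_class.open_discrete vimage_def)
  thus ?thesis unfolding pair_cylinder_def by (simp add: Collect_conj_eq open_Int)
qed

definition set_seq :: "nat set \<Rightarrow> nat \<Rightarrow> real" where
  "set_seq S n = (if Suc n \<in> S then 1 else 0)"

lemma card_Int_atLeastAtMost_eq_sum_set_seq:
  "real (card (S \<inter> {1..N})) = (\<Sum>n<N. set_seq S n)"
proof -
  have "S \<inter> {1..N} = Suc ` {n\<in>{..<N}. Suc n \<in> S}"
    by (auto simp: image_iff) (metis Suc_le_eq Suc_pred le_simps(3) le_zero_eq not_less_eq_eq)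
  hence "card (S \<inter> {1..N}) = card {n\<in>{..<N}. Suc n \<in> S}" by (simp add: card_image)
  thus ?thesis by (simp add: set_seq_def sum.If_cases Int_def)
qed

lemma set_seq_pair_cylinder:
  "indicator (pair_cylinder i) ((shift ^^ n) (indic_pt S)) = set_seq S n * set_seq S (n + i)"
  by (simp add: funpow_shift indic_pt_def pair_cylinder_def set_seq_def indicator_def add.commute)

text \<open>Genericity evaluated at the cylinders \<open>{\<omega>\<^sub>0 = \<omega>\<^sub>i = 1}\<close> gives the correlations of the
  sequence, and weak mixing applied to \<open>{\<omega>\<^sub>0 = 1}\<close> says they are Cesaro close to \<open>d\<^sup>2\<close>.\<close>

lemma WM_set_correlations:
  assumes "WM_set S"
  obtains d \<beta> where "d > 0" and "(\<lambda>N. (\<Sum>n<N. set_seq S n) / real N) \<longlonglongrightarrow> d"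
    and "\<And>k. (\<lambda>N. (\<Sum>n<N. set_seq S n * set_seq S (n+k)) / real N) \<longlonglongrightarrow> \<beta> k"
    and "(\<lambda>H. (\<Sum>k<H. \<bar>\<beta> k - d\<^sup>2\<bar>) / real H) \<longlonglongrightarrow> 0"
proof -
  define X where "X = orbit_closure (indic_pt S)"
  from assms obtain \<mu> d where inv: "invariant_borel_prob X \<mu>" and gen: "generic_point X \<mu> (indic_pt S)"
    and wm: "weakly_mixing \<mu> shift" and "d > 0" and density: "has_density S d"
    unfolding WM_set_def X_def by blast
  interpret prob_space \<mu> using inv by (simp add: invariant_borel_prob_def)
  have sets_\<mu>: "sets \<mu> = sets borel" using inv by (simp add: invariant_borel_prob_def)
  hence space_\<mu>: "space \<mu> = UNIV" using sets_eq_imp_space_eq by fastforce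
  have cyl: "pair_cylinder i \<in> sets \<mu>" for i unfolding sets_\<mu> by (rule borel_open[OF open_pair_cylinder])
  have "AE x in \<mu>. x \<in> X"
    using inv unfolding invariant_borel_prob_def by (intro AE_prob_1) (simp add: measure_def)
  moreover have "X \<in> sets \<mu>" unfolding sets_\<mu> X_def orbit_closure_def by (rule borel_closed) simp
  ultimately have "(LINT x:X|\<mu>. indicator (pair_cylinder i) x) = measure \<mu> (pair_cylinder i)" for i
    using cyl[of i] by (auto simp: set_lebesgue_integral_def indicator_inter_arith[symmetric] space_\<mu>
        intro!: measure_eq_AE)
  hence corr: "(\<lambda>N. (\<Sum>n<N. set_seq S n * set_seq S (n + i)) / real N) \<longlonglongrightarrow> measure \<mu> (pair_cylinder i)"
    for i using gen continuous_on_indicator_pair_cylinder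
    unfolding generic_point_def set_seq_pair_cylinder[symmetric] by metis
  have mean: "(\<lambda>N. (\<Sum>n<N. set_seq S n) / real N) \<longlonglongrightarrow> d"
    using density unfolding has_density_def card_Int_atLeastAtMost_eq_sum_set_seq .
  moreover have "(\<lambda>n. set_seq S n * set_seq S (n + 0)) = set_seq S" by (auto simp: set_seq_def)
  ultimately have "measure \<mu> (pair_cylinder 0) = d" using corr[of 0] LIMSEQ_unique by metis
  moreover have "pair_cylinder 0 \<inter> ((shift ^^ n) -` pair_cylinder 0 \<inter> space \<mu>) = pair_cylinder n" for n
    by (auto simp: pair_cylinder_def funpow_shift space_\<mu>)
  moreover have "(\<lambda>N. (\<Sum>n<N. \<bar>measure \<mu> (pair_cylinder 0 \<inter> ((shift ^^ n) -` pair_cylinder 0 \<inter> space \<mu>))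
      - measure \<mu> (pair_cylinder 0) * measure \<mu> (pair_cylinder 0)\<bar>) / real N) \<longlonglongrightarrow> 0"
    using wm cyl[of 0] unfolding weakly_mixing_def by blast
  ultimately have "(\<lambda>H. (\<Sum>k<H. \<bar>measure \<mu> (pair_cylinder k) - d\<^sup>2\<bar>) / real H) \<longlonglongrightarrow> 0"
    by (simp add: power2_eq_square)
  with \<open>d > 0\<close> mean corr show ?thesis by (rule that)
qed

lemma upper_banach_density_pos_imp_dense_windows:
  fixes E :: "nat set"
  assumes "upper_banach_density E > 0"
  obtains \<delta> l P where "\<delta> > 0" and "\<And>j. l j > (j::nat)"
    and "\<And>j. \<delta> * real (l j) \<le> (\<Sum>x\<in>{P j..<P j + l j}. if x \<in> E then 1 else (0::real))"
proof -
  from assms obtain a b :: "nat \<Rightarrow> nat" where ab: "\<forall>n. a n \<le> b n"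
    and lengths: "filterlim (\<lambda>n. b n - a n) at_top sequentially"
    and pos: "0 < limsup (\<lambda>n. ereal (real (card (E \<inter> {a n..b n})) / real (b n - a n + 1)))"
    unfolding upper_banach_density_def less_Sup_iff by blast
  define f where "f n = ereal (real (card (E \<inter> {a n..b n})) / real (b n - a n + 1))" for n
  obtain z where "0 < ereal z" and "ereal z < limsup f"
    using ereal_dense2[OF pos] unfolding f_def by blast
  have "\<exists>m\<ge>n. ereal z < f m" for n
  proof -
    have "ereal z < (SUP m\<in>{n..}. f m)"
      using \<open>ereal z < limsup f\<close> unfolding limsup_INF_SUP by (meson UNIV_I less_INF_D)
    thus ?thesis by (auto simp: less_SUP_iff)
  qed
  moreover have "\<exists>n0. \<forall>n\<ge>n0. Suc j \<le> b n - a n" for j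
    using lengths by (simp add: filterlim_at_top eventually_sequentially)
  ultimately have "\<exists>m. Suc j \<le> b m - a m \<and> ereal z < f m" for j by (meson order.trans)
  then obtain g where g: "\<And>j. Suc j \<le> b (g j) - a (g j) \<and> ereal z < f (g j)" by metis
  define P where "P j = a (g j)" for j
  define l where "l j = b (g j) - a (g j) + 1" for j
  have long: "l j > j" for j using g[of j] by (simp add: l_def)
  have dense: "z * real (l j) \<le> (\<Sum>x\<in>{P j..<P j + l j}. if x \<in> E then 1 else (0::real))" for j
  proof -
    have window: "{P j..<P j + l j} = {a (g j)..b (g j)}" using ab by (auto simp: P_def l_def)
    have "z < real (card (E \<inter> {a (g j)..b (g j)})) / real (l j)"
      using g[of j] by (simp add: f_def l_def)
    hence "z * real (l j) < real (card (E \<inter> {a (g j)..b (g j)}))"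
      using long[of j] by (simp add: pos_less_divide_eq)
    thus ?thesis unfolding window by (simp add: sum.If_cases Int_commute)
  qed
  show ?thesis by (rule that[OF _ long dense]) (use \<open>0 < ereal z\<close> in simp)
qed

lemma WM_set_meets_pos_def_seq:
  assumes "WM_set S" and "pos_def_seq c" and "\<And>k. \<bar>c k\<bar> \<le> 1" and "\<delta> > 0"
    and "\<And>N. \<delta> * real N ^ 2 \<le> toeplitz_form c N (\<lambda>_. 1) (\<lambda>_. 1)"
  shows "\<exists>s\<in>S. c s > 0"
proof -
  obtain d \<beta> where S_wm: "d > 0" "(\<lambda>N. (\<Sum>n<N. set_seq S n) / real N) \<longlonglongrightarrow> d"
    "\<And>k. (\<lambda>N. (\<Sum>n<N. set_seq S n * set_seq S (n+k)) / real N) \<longlonglongrightarrow> \<beta> k"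
    "(\<lambda>H. (\<Sum>k<H. \<bar>\<beta> k - d\<^sup>2\<bar>) / real H) \<longlonglongrightarrow> 0"
    using WM_set_correlations[OF assms(1)] by blast
  have "set_seq S n = 0 \<or> set_seq S n = 1" for n by (simp add: set_seq_def)
  then obtain n where "set_seq S n = 1" "c (Suc n) > 0"
    using pos_def_seq_positive_on_wm_sequence[OF assms(2-5) _ S_wm] by blast
  thus ?thesis by (auto simp: set_seq_def split: if_splits)
qed

lemma WM_set_recurrent:
  assumes "WM_set S" and "upper_banach_density E > 0"
  shows "\<exists>s\<in>S. \<exists>m\<in>E. m + s \<in> E"
proof -
  obtain \<delta> l P where "\<delta> > 0" and long: "\<And>j. l j > j"
    and dense: "\<And>j. \<delta> * real (l j) \<le> (\<Sum>x\<in>{P j..<P j + l j}. if x \<in> E then 1 else (0::real))"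
    using upper_banach_density_pos_imp_dense_windows[OF assms(2)] by metis
  obtain c where c: "pos_def_seq c" "\<And>k. \<bar>c k\<bar> \<le> 1"
    "\<And>N. \<delta>\<^sup>2 * real N ^ 2 \<le> toeplitz_form c N (\<lambda>_. 1) (\<lambda>_. 1)" "\<And>k. c k > 0 \<Longrightarrow> \<exists>m\<in>E. m + k \<in> E"
    using pos_def_seq_of_dense_windows[OF long \<open>\<delta> > 0\<close> dense] by metis
  have "\<delta>\<^sup>2 > 0" using \<open>\<delta> > 0\<close> by simp
  then obtain s where "s \<in> S" "c s > 0" using WM_set_meets_pos_def_seq[OF assms(1) c(1,2) _ c(3)] by blast
  thus ?thesis using c(4) by blast
qed

lemma WM_set_poincare:
  assumes "WM_set S" and "prob_space M" "T \<in> measurable M M" "distr M M T = M"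
    and "A \<in> sets M" "measure M A > 0"
  shows "\<exists>s\<in>S. measure M (A \<inter> ((T ^^ s) -` A \<inter> space M)) > 0"
proof -
  have "measure M A ^ 2 > 0" using \<open>measure M A > 0\<close> by simp
  thus ?thesis
    using WM_set_meets_pos_def_seq[OF assms(1) pos_def_seq_return_corr abs_return_corr_le_1 _
        toeplitz_form_return_corr_ones, OF assms(2-5) assms(2-5) _ assms(2-5)]
    unfolding return_corr_def by blast
qed

theorem mainTheorem6:
  fixes S :: "nat set"
  assumes "WM_set S"
  shows "(\<forall>E. E \<subseteq> {1..} \<and> upper_banach_density E > 0 \<longrightarrow>
             (\<exists>s\<in>S. \<exists>m\<in>E. m + s \<in> E))
       \<and> (\<forall>(M :: 'a measure) T. prob_space M \<and> T \<in> measurable M M \<and> distr M M T = M \<longrightarrow>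
             (\<forall>A\<in>sets M. measure M A > 0 \<longrightarrow>
                (\<exists>s\<in>S. measure M (A \<inter> ((T ^^ s) -` A \<inter> space M)) > 0)))"
  by (auto intro: WM_set_recurrent[OF assms] WM_set_poincare[OF assms])

end
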